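(* Let $X$ be a real Banach space ordered by a generating and normal cone $K$. Let $\hat A$ be a bounded linear operator on $X$ with $\hat A(K)\subseteq K$, and suppose $\hat A=T+F$ where $T,F$ are bounded linear operators with $T(K)\subseteq K$, $F(K)\subseteq K$ and $r(T)<1$. Then the function $\lambda\mapsto r\big(F(\lambda I-T)^{-1}\big)$ is non-increasing and convex on $(r(T),\infty)$, and exactly one of the following holds: 1. $r\big(F(\lambda I-T)^{-1}\big)<1$ for all $\lambda>r(T)$; in this case $r(\hat A)=r(T)$. 2. There exist $r(T)<\lambda_1<\lambda_2$ with $r\big(F(\lambda_1 I-T)^{-1}\big)\ge 1$ and $r\big(F(\lambda_2 I-T)^{-1}\big)<1$; in this case $r(\hat A)>r(T)$ and $r\big(F(r(\hat A)I-T)^{-1}\big)=1$.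
   Context: A cone $K\subseteq X$ is a closed convex set such that $\alpha x\in K$ whenever $x\in K,\ \alpha\ge 0$, and such that $x\in K$, $-x\in K$ imply $x=0$. $K$ is generating if $X=K-K$, and normal if there is $\gamma>0$ such that $0\le x\le y$ implies $\|x\|\le\gamma\|y\|$, where $x\le y$ means $y-x\in K$. Spectrum and spectral radius $r(\cdot)$ of operators on a real Banach space are those of the complexification. *)

theory Defs
  imports "HOL-Analysis.Analysis"
begin

definition is_cone :: "'a::real_normed_vector set \<Rightarrow> bool" where
  "is_cone K \<longleftrightarrow> closed K \<and> convex K \<and>
     (\<forall>x\<in>K. \<forall>\<alpha>::real. \<alpha> \<ge> 0 \<longrightarrow> \<alpha> *\<^sub>R x \<in> K) \<and>
     (\<forall>x. x \<in> K \<and> - x \<in> K \<longrightarrow> x = 0)"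

definition generating_cone :: "'a::real_normed_vector set \<Rightarrow> bool" where
  "generating_cone K \<longleftrightarrow> UNIV = {x - y | x y. x \<in> K \<and> y \<in> K}"

definition normal_cone :: "'a::real_normed_vector set \<Rightarrow> bool" where
  "normal_cone K \<longleftrightarrow> (\<exists>\<gamma>>0. \<forall>x y. x \<in> K \<and> y - x \<in> K \<longrightarrow> norm x \<le> \<gamma> * norm y)"

text \<open>Complexification: \<open>X_C = X \<times> X\<close> (pair \<open>(x,y)\<close> stands for \<open>x + i y\<close>).
  The operator \<open>z I - T_C\<close> on \<open>X_C\<close> for \<open>z = a + i b\<close>.\<close>
definition cshift :: "('a::real_normed_vector \<Rightarrow>\<^sub>L 'a) \<Rightarrow> complex \<Rightarrow> 'a \<times> 'a \<Rightarrow> 'a \<times> 'a" where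
  "cshift T z = (\<lambda>(x, y).
     (Re z *\<^sub>R x - Im z *\<^sub>R y - blinfun_apply T x,
      Im z *\<^sub>R x + Re z *\<^sub>R y - blinfun_apply T y))"

definition cspectrum :: "('a::real_normed_vector \<Rightarrow>\<^sub>L 'a) \<Rightarrow> complex set" where
  "cspectrum T = {z. \<not> (\<exists>S. bounded_linear S \<and> S \<circ> cshift T z = id \<and> cshift T z \<circ> S = id)}"

text \<open>Spectral radius (with the convention \<open>r = 0\<close> if the spectrum is empty,
  which only happens for the trivial space).\<close>
definition spec_rad :: "('a::real_normed_vector \<Rightarrow>\<^sub>L 'a) \<Rightarrow> real" where
  "spec_rad T = Sup (insert 0 (cmod ` cspectrum T))"

text \<open>Inverse of a bounded operator on \<open>X\<close> (meaningful when it is invertible).\<close>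
definition op_inv :: "('a::real_normed_vector \<Rightarrow>\<^sub>L 'a) \<Rightarrow> ('a \<Rightarrow>\<^sub>L 'a)" where
  "op_inv M = (SOME S. S o\<^sub>L M = id_blinfun \<and> M o\<^sub>L S = id_blinfun)"

definition FR :: "('a::real_normed_vector \<Rightarrow>\<^sub>L 'a) \<Rightarrow> ('a \<Rightarrow>\<^sub>L 'a) \<Rightarrow> real \<Rightarrow> ('a \<Rightarrow>\<^sub>L 'a)" where
  "FR F T l = F o\<^sub>L op_inv (l *\<^sub>R id_blinfun - T)"

end

theory Submission
  imports Defs
begin

(*
  For a positive operator B on a space ordered by a normal generating cone, the Gelfand radius
  r(B) = inf \<parallel>B\<^sup>n\<parallel>\<^sup>1\<^sup>/\<^sup>n is a point of the spectrum, and r(B) < l exactly when l I - B has a positive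
  inverse. Since l I - (T + F) = (I - F R\<^sub>l) (l I - T) with the positive resolvent
  R\<^sub>l = (l I - T)\<^sup>-\<^sup>1, this gives r(F R\<^sub>l) < 1 iff r(T + F) < l, for every l > r(T).
  The map l \<mapsto> r(F R\<^sub>l) is antitone because R\<^sub>l is, and it is log-convex, hence convex, because
  F R\<^sub>l = \<Sum> l\<^sup>-\<^sup>k\<^sup>-\<^sup>1 F T\<^sup>k is a limit of polynomials in 1/l with positive coefficients, for which
  a weighted AM-GM inequality holds termwise in the order of the cone. The dichotomy, and
  r(F R\<^sub>l) = 1 at l = r(T + F), follow from the equivalence and the continuity of convex functions.
*)

section \<open>Powers of operators and the Gelfand radius\<close>

lemma blinfun_compose_id [simp]:
  "B o\<^sub>L id_blinfun = B" "id_blinfun o\<^sub>L B = B"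
  by (auto intro: blinfun_eqI)

lemma blinfun_compose_assoc: "(A o\<^sub>L B) o\<^sub>L C = A o\<^sub>L (B o\<^sub>L C)"
  by (rule blinfun_eqI) simp

lemma blinfun_compose_add_left: "(A + B) o\<^sub>L C = (A o\<^sub>L C) + (B o\<^sub>L C)"
  by (rule blinfun_eqI) (simp add: blinfun.bilinear_simps)

lemma blinfun_compose_diff_left: "(A - B) o\<^sub>L C = (A o\<^sub>L C) - (B o\<^sub>L C)"
  by (rule blinfun_eqI) (simp add: blinfun.bilinear_simps)

lemma blinfun_compose_diff_right: "A o\<^sub>L (B - C) = (A o\<^sub>L B) - (A o\<^sub>L C)"
  by (rule blinfun_eqI) (simp add: blinfun.bilinear_simps)

lemma blinfun_compose_inverse:
  assumes "A' o\<^sub>L A = id_blinfun" "A o\<^sub>L A' = id_blinfun"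
    and "B' o\<^sub>L B = id_blinfun" "B o\<^sub>L B' = id_blinfun"
  shows "(B' o\<^sub>L A') o\<^sub>L (A o\<^sub>L B) = id_blinfun" "(A o\<^sub>L B) o\<^sub>L (B' o\<^sub>L A') = id_blinfun"
proof -
  have "\<And>x. A' (A x) = x" "\<And>x. A (A' x) = x" "\<And>x. B' (B x) = x" "\<And>x. B (B' x) = x"
    using assms by (metis blinfun_apply_blinfun_compose blinfun_apply_id_blinfun)+
  then show "(B' o\<^sub>L A') o\<^sub>L (A o\<^sub>L B) = id_blinfun" "(A o\<^sub>L B) o\<^sub>L (B' o\<^sub>L A') = id_blinfun"
    by (auto intro: blinfun_eqI)
qed

primrec blinfun_pow :: "('a::real_normed_vector \<Rightarrow>\<^sub>L 'a) \<Rightarrow> nat \<Rightarrow> ('a \<Rightarrow>\<^sub>L 'a)" where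
  "blinfun_pow B 0 = id_blinfun"
| "blinfun_pow B (Suc n) = B o\<^sub>L blinfun_pow B n"

lemma blinfun_pow_add: "blinfun_pow B (m + n) = blinfun_pow B m o\<^sub>L blinfun_pow B n"
  by (induction m) (auto intro: blinfun_eqI)

lemma blinfun_pow_Suc_right: "blinfun_pow B (Suc n) = blinfun_pow B n o\<^sub>L B"
  using blinfun_pow_add[of B n 1] by (simp add: blinfun_eqI)

lemma blinfun_pow_commute: "B (blinfun_pow B n x) = blinfun_pow B n (B x)"
  using blinfun_pow_Suc_right[of B n] by (metis blinfun_apply_blinfun_compose blinfun_pow.simps(2))

lemma norm_blinfun_pow_add: "norm (blinfun_pow B (m + n)) \<le> norm (blinfun_pow B m) * norm (blinfun_pow B n)"
  by (simp add: blinfun_pow_add norm_blinfun_compose)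

lemma norm_blinfun_pow_mult: "norm (blinfun_pow B (k * m)) \<le> norm (blinfun_pow B m) ^ k"
proof (induction k)
  case 0
  then show ?case by (simp add: norm_blinfun_id_le)
next
  case (Suc k)
  have "norm (blinfun_pow B (Suc k * m)) \<le> norm (blinfun_pow B m) * norm (blinfun_pow B (k * m))"
    using norm_blinfun_pow_add[of B m "k * m"] by simp
  also have "\<dots> \<le> norm (blinfun_pow B m) * norm (blinfun_pow B m) ^ k"
    using Suc by (simp add: mult_left_mono)
  finally show ?case by simp
qed

lemma norm_blinfun_pow_le: "norm (blinfun_pow B n) \<le> norm B ^ n"
  using norm_blinfun_pow_mult[of B n 1] by (simp add: norm_blinfun_id_le)

lemma tendsto_blinfun_pow:
  "(f \<longlongrightarrow> L) F \<Longrightarrow> ((\<lambda>x. blinfun_pow (f x) n) \<longlongrightarrow> blinfun_pow L n) F"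
  by (induction n) (auto intro: bounded_bilinear.tendsto[OF bounded_bilinear_blinfun_compose])

text \<open>Gelfand's formula, with the limit replaced by the infimum (the two agree by Fekete's lemma).\<close>
definition gelfand_radius :: "('a::real_normed_vector \<Rightarrow>\<^sub>L 'a) \<Rightarrow> real" where
  "gelfand_radius B = Inf ((\<lambda>n. root n (norm (blinfun_pow B n))) ` {1..})"

lemma bdd_below_root_norm_blinfun_pow: "bdd_below ((\<lambda>n. root n (norm (blinfun_pow B n))) ` {1..})"
  by (rule bdd_belowI[of _ 0]) auto

lemma gelfand_radius_le_root: "n \<ge> 1 \<Longrightarrow> gelfand_radius B \<le> root n (norm (blinfun_pow B n))"
  unfolding gelfand_radius_def by (rule cInf_lower[OF _ bdd_below_root_norm_blinfun_pow]) auto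

lemma gelfand_radius_nonneg: "gelfand_radius B \<ge> 0"
  unfolding gelfand_radius_def by (rule cINF_greatest) auto

lemma norm_blinfun_pow_bound:
  assumes "gelfand_radius B < \<eta>"
  obtains C where "\<And>n. norm (blinfun_pow B n) \<le> C * \<eta> ^ n"
proof -
  obtain m where m: "m \<ge> 1" "root m (norm (blinfun_pow B m)) < \<eta>"
    using assms unfolding gelfand_radius_def
    by (subst (asm) cInf_less_iff[OF _ bdd_below_root_norm_blinfun_pow]) auto
  have \<eta>: "\<eta> > 0" using gelfand_radius_nonneg[of B] assms by linarith
  have "root m (norm (blinfun_pow B m)) ^ m \<le> \<eta> ^ m"
    using m by (intro power_mono) auto
  then have pow_m: "norm (blinfun_pow B m) \<le> \<eta> ^ m"
    using m(1) by (simp add: real_root_pow_pos2)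
  define C where "C = Max ((\<lambda>j. norm (blinfun_pow B j) / \<eta> ^ j) ` {..<m})"
  have "norm (blinfun_pow B n) \<le> C * \<eta> ^ n" for n
  proof -
    define k j where "k = n div m" and "j = n mod m"
    have n: "n = j + k * m" and j: "j < m" using m(1) by (simp_all add: k_def j_def)
    have "norm (blinfun_pow B n) \<le> norm (blinfun_pow B j) * norm (blinfun_pow B (k * m))"
      unfolding n by (rule norm_blinfun_pow_add)
    also have "\<dots> \<le> norm (blinfun_pow B j) * (\<eta> ^ m) ^ k"
      using norm_blinfun_pow_mult[of B k m] power_mono[OF pow_m, of k]
      by (intro mult_left_mono) auto
    also have "\<dots> = (norm (blinfun_pow B j) / \<eta> ^ j) * \<eta> ^ n"
      using \<eta> by (simp add: n power_add power_mult[symmetric] mult.commute)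
    also have "\<dots> \<le> C * \<eta> ^ n"
      unfolding C_def using j \<eta> by (intro mult_right_mono Max_ge) auto
    finally show ?thesis .
  qed
  then show ?thesis by (rule that)
qed

lemma gelfand_radius_le_of_bound:
  assumes \<theta>: "\<theta> > 0" and bound: "\<And>n. norm (blinfun_pow B n) \<le> M * \<theta> ^ n"
  shows "gelfand_radius B \<le> \<theta>"
proof -
  define M' where "M' = max M 1"
  have bound': "norm (blinfun_pow B n) \<le> M' * \<theta> ^ n" for n
    using bound[of n] \<theta> unfolding M'_def by (smt (verit) mult_right_mono zero_le_power)
  have "gelfand_radius B \<le> root n M' * \<theta>" if "n \<ge> 1" for n
  proof -
    have "gelfand_radius B \<le> root n (norm (blinfun_pow B n))"
      using that by (rule gelfand_radius_le_root)
    also have "\<dots> \<le> root n (M' * \<theta> ^ n)" using that bound' by simp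
    also have "\<dots> = root n M' * \<theta>"
      using that \<theta> by (simp add: real_root_mult real_root_power_cancel)
    finally show ?thesis .
  qed
  moreover have "(\<lambda>n. root n M' * \<theta>) \<longlonglongrightarrow> 1 * \<theta>"
    unfolding M'_def by (intro tendsto_intros LIMSEQ_root_const) auto
  ultimately have "gelfand_radius B \<le> 1 * \<theta>"
    by (intro tendsto_lowerbound) (auto intro!: eventually_sequentiallyI[of 1])
  then show ?thesis by simp
qed

section \<open>Neumann series\<close>

lemma summable_blinfun_power_series:
  fixes B :: "'a::banach \<Rightarrow>\<^sub>L 'a"
  assumes "gelfand_radius B < r" and coeff: "\<And>n. \<bar>a n\<bar> \<le> D / r ^ n"
  shows "summable (\<lambda>n. a n *\<^sub>R blinfun_pow B n)"
proof -
  obtain \<eta> where \<eta>: "gelfand_radius B < \<eta>" "\<eta> < r" using assms(1) dense by blast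
  obtain C where C: "\<And>n. norm (blinfun_pow B n) \<le> C * \<eta> ^ n"
    using norm_blinfun_pow_bound[OF \<eta>(1)] by blast
  have "\<eta> > 0" using gelfand_radius_nonneg[of B] \<eta> by linarith
  then have "summable (\<lambda>n. (D * C) * (\<eta> / r) ^ n)"
    using \<eta> by (intro summable_mult summable_geometric) auto
  then show ?thesis
  proof (rule summable_comparison_test'[where N=0])
    fix n
    have "norm (a n *\<^sub>R blinfun_pow B n) = \<bar>a n\<bar> * norm (blinfun_pow B n)" by simp
    also have "\<dots> \<le> (D / r ^ n) * (C * \<eta> ^ n)"
      using order_trans[OF abs_ge_zero coeff] by (intro mult_mono C coeff) auto
    also have "\<dots> = (D * C) * (\<eta> / r) ^ n" by (simp add: power_divide field_simps)
    finally show "norm (a n *\<^sub>R blinfun_pow B n) \<le> (D * C) * (\<eta> / r) ^ n" .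
  qed
qed

lemma blinfun_power_series_shift:
  assumes "(\<lambda>n. c (Suc n) *\<^sub>R blinfun_pow B n) sums R"
  shows "(\<lambda>n. c n *\<^sub>R blinfun_pow B n) sums (c 0 *\<^sub>R id_blinfun + (B o\<^sub>L R))"
    and "(\<lambda>n. c n *\<^sub>R blinfun_pow B n) sums (c 0 *\<^sub>R id_blinfun + (R o\<^sub>L B))"
proof -
  have "(\<lambda>n. B o\<^sub>L (c (Suc n) *\<^sub>R blinfun_pow B n)) sums (B o\<^sub>L R)"
    using assms by (rule bounded_linear.sums[OF bounded_bilinear.bounded_linear_right[OF bounded_bilinear_blinfun_compose]])
  moreover have "B o\<^sub>L (c (Suc n) *\<^sub>R blinfun_pow B n) = c (Suc n) *\<^sub>R blinfun_pow B (Suc n)" for n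
    by (rule blinfun_eqI) (simp add: blinfun.bilinear_simps)
  ultimately show "(\<lambda>n. c n *\<^sub>R blinfun_pow B n) sums (c 0 *\<^sub>R id_blinfun + (B o\<^sub>L R))"
    using sums_Suc_iff[of "\<lambda>n. c n *\<^sub>R blinfun_pow B n"] by (simp add: add.commute)
  have "(\<lambda>n. (c (Suc n) *\<^sub>R blinfun_pow B n) o\<^sub>L B) sums (R o\<^sub>L B)"
    using assms by (rule bounded_linear.sums[OF bounded_bilinear.bounded_linear_left[OF bounded_bilinear_blinfun_compose]])
  moreover have "(c (Suc n) *\<^sub>R blinfun_pow B n) o\<^sub>L B = c (Suc n) *\<^sub>R blinfun_pow B (Suc n)" for n
    by (rule blinfun_eqI) (simp add: blinfun.bilinear_simps blinfun_pow_commute)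
  ultimately show "(\<lambda>n. c n *\<^sub>R blinfun_pow B n) sums (c 0 *\<^sub>R id_blinfun + (R o\<^sub>L B))"
    using sums_Suc_iff[of "\<lambda>n. c n *\<^sub>R blinfun_pow B n"] by (simp add: add.commute)
qed

definition resolvent :: "('a::real_normed_vector \<Rightarrow>\<^sub>L 'a) \<Rightarrow> real \<Rightarrow> ('a \<Rightarrow>\<^sub>L 'a)" where
  "resolvent B l = (\<Sum>n. (1 / l) ^ Suc n *\<^sub>R blinfun_pow B n)"

lemma resolvent_sums:
  fixes B :: "'a::banach \<Rightarrow>\<^sub>L 'a"
  assumes "gelfand_radius B < l"
  shows "(\<lambda>n. (1 / l) ^ Suc n *\<^sub>R blinfun_pow B n) sums resolvent B l"
proof -
  have "l > 0" using gelfand_radius_nonneg[of B] assms by linarith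
  then have "\<bar>(1 / l) ^ Suc n\<bar> \<le> (1 / l) / l ^ n" for n
    by (simp add: power_one_over)
  then show ?thesis
    unfolding resolvent_def by (intro summable_sums summable_blinfun_power_series[OF assms])
qed

lemma resolvent_inverse:
  fixes B :: "'a::banach \<Rightarrow>\<^sub>L 'a"
  assumes "gelfand_radius B < l"
  shows "resolvent B l o\<^sub>L (l *\<^sub>R id_blinfun - B) = id_blinfun"
    and "(l *\<^sub>R id_blinfun - B) o\<^sub>L resolvent B l = id_blinfun"
proof -
  have "l > 0" using gelfand_radius_nonneg[of B] assms by linarith
  have rescale: "(\<lambda>n. (1 / l) ^ n *\<^sub>R blinfun_pow B n) = (\<lambda>n. l *\<^sub>R ((1 / l) ^ Suc n *\<^sub>R blinfun_pow B n))"
    using \<open>l > 0\<close> by (simp add: fun_eq_iff)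
  have series: "(\<lambda>n. (1 / l) ^ n *\<^sub>R blinfun_pow B n) sums (l *\<^sub>R resolvent B l)"
    unfolding rescale by (rule sums_scaleR_right[OF resolvent_sums[OF assms]])
  note shift = blinfun_power_series_shift[where c = "\<lambda>n. (1 / l) ^ n", OF resolvent_sums[OF assms]]
  have "l *\<^sub>R resolvent B l = id_blinfun + (resolvent B l o\<^sub>L B)"
    using sums_unique2[OF series shift(2)] by simp
  moreover have "resolvent B l o\<^sub>L (l *\<^sub>R id_blinfun - B) = l *\<^sub>R resolvent B l - (resolvent B l o\<^sub>L B)"
    by (rule blinfun_eqI) (simp add: blinfun.bilinear_simps)
  ultimately show "resolvent B l o\<^sub>L (l *\<^sub>R id_blinfun - B) = id_blinfun"
    by simp
  have "l *\<^sub>R resolvent B l = id_blinfun + (B o\<^sub>L resolvent B l)"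
    using sums_unique2[OF series shift(1)] by simp
  moreover have "(l *\<^sub>R id_blinfun - B) o\<^sub>L resolvent B l = l *\<^sub>R resolvent B l - (B o\<^sub>L resolvent B l)"
    by (rule blinfun_eqI) (simp add: blinfun.bilinear_simps)
  ultimately show "(l *\<^sub>R id_blinfun - B) o\<^sub>L resolvent B l = id_blinfun"
    by simp
qed

text \<open>Resolvent identity: \<open>W = R - \<delta> W R\<close>.\<close>
lemma norm_inverse_shift_diff_le:
  fixes B :: "'a::real_normed_vector \<Rightarrow>\<^sub>L 'a"
  assumes R: "(\<rho> *\<^sub>R id_blinfun - B) o\<^sub>L R = id_blinfun"
    and W: "W o\<^sub>L ((\<rho> + \<delta>) *\<^sub>R id_blinfun - B) = id_blinfun"
    and \<delta>: "\<delta> \<ge> 0" "\<delta> * norm R \<le> 1/2"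
  shows "norm (W - R) \<le> 2 * \<delta> * norm R ^ 2"
proof -
  have "W (((\<rho> + \<delta>) *\<^sub>R id_blinfun - B) y) = y" for y
    using arg_cong[OF W, of "\<lambda>M. blinfun_apply M y"] by simp
  moreover have "((\<rho> + \<delta>) *\<^sub>R id_blinfun - B) (R x) = x + \<delta> *\<^sub>R R x" for x
  proof -
    have "((\<rho> + \<delta>) *\<^sub>R id_blinfun - B) (R x) = ((\<rho> *\<^sub>R id_blinfun - B) o\<^sub>L R) x + \<delta> *\<^sub>R R x"
      by (simp add: blinfun.bilinear_simps algebra_simps)
    then show ?thesis using R by simp
  qed
  ultimately have "W (x + \<delta> *\<^sub>R R x) = R x" for x by metis
  then have "W x + \<delta> *\<^sub>R W (R x) = R x" for x by (simp add: blinfun.bilinear_simps)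
  then have "R = W + \<delta> *\<^sub>R (W o\<^sub>L R)"
    by (intro blinfun_eqI) (simp add: blinfun.bilinear_simps)
  then have "W - R = - (\<delta> *\<^sub>R (W o\<^sub>L R))"
    by (metis add_diff_cancel_left' minus_diff_eq)
  then have diff: "norm (W - R) \<le> \<delta> * (norm W * norm R)"
    using \<delta>(1) norm_blinfun_compose[of W R] by (simp add: mult_left_mono)
  have "norm W \<le> norm R + norm (W - R)"
    using norm_triangle_ineq[of R "W - R"] by simp
  also have "\<dots> \<le> norm R + (\<delta> * norm R) * norm W"
    using diff by (simp add: algebra_simps)
  also have "\<dots> \<le> norm R + norm W / 2"
    using mult_right_mono[OF \<delta>(2) norm_ge_zero[of W]] by simp
  finally have "norm W \<le> 2 * norm R" by simp
  have "\<delta> * (norm W * norm R) \<le> \<delta> * (2 * norm R * norm R)"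
    using \<open>norm W \<le> 2 * norm R\<close> \<delta>(1) by (intro mult_left_mono mult_right_mono) auto
  then show ?thesis using diff by (simp add: power2_eq_square)
qed

lemma op_inv_eq:
  assumes left: "W o\<^sub>L M = id_blinfun" and right: "M o\<^sub>L W = id_blinfun"
  shows "op_inv M = W"
proof -
  have inv: "op_inv M o\<^sub>L M = id_blinfun \<and> M o\<^sub>L op_inv M = id_blinfun"
    unfolding op_inv_def by (rule someI[of _ W]) (use assms in auto)
  have "op_inv M = op_inv M o\<^sub>L (M o\<^sub>L W)" using right by simp
  also have "\<dots> = (op_inv M o\<^sub>L M) o\<^sub>L W" by (simp add: blinfun_compose_assoc)
  finally show ?thesis using inv by simp
qed

lemma op_inv_eq_resolvent:
  fixes B :: "'a::banach \<Rightarrow>\<^sub>L 'a"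
  shows "gelfand_radius B < l \<Longrightarrow> op_inv (l *\<^sub>R id_blinfun - B) = resolvent B l"
  by (intro op_inv_eq resolvent_inverse)

lemma FR_eq_resolvent:
  fixes T :: "'a::banach \<Rightarrow>\<^sub>L 'a"
  shows "gelfand_radius T < l \<Longrightarrow> FR F T l = F o\<^sub>L resolvent T l"
  by (simp add: FR_def op_inv_eq_resolvent)

lemma tendsto_partial_FR_pow:
  fixes T :: "'a::banach \<Rightarrow>\<^sub>L 'a"
  assumes "gelfand_radius T < v"
  shows "(\<lambda>M. blinfun_pow (F o\<^sub>L (\<Sum>k<M. (1 / v) ^ Suc k *\<^sub>R blinfun_pow T k)) n u)
    \<longlonglongrightarrow> blinfun_pow (FR F T v) n u"
proof -
  have "(\<lambda>M. \<Sum>k<M. (1 / v) ^ Suc k *\<^sub>R blinfun_pow T k) \<longlonglongrightarrow> resolvent T v"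
    using resolvent_sums[OF assms] by (simp add: sums_def)
  then have "(\<lambda>M. F o\<^sub>L (\<Sum>k<M. (1 / v) ^ Suc k *\<^sub>R blinfun_pow T k)) \<longlonglongrightarrow> FR F T v"
    unfolding FR_eq_resolvent[OF assms]
    by (rule bounded_linear.tendsto[OF bounded_bilinear.bounded_linear_right[OF bounded_bilinear_blinfun_compose]])
  then show ?thesis
    by (rule bounded_linear.tendsto[OF blinfun.bounded_linear_left tendsto_blinfun_pow])
qed

section \<open>The spectrum of the complexification\<close>

text \<open>For \<open>|z| > r(B)\<close> the resolvent \<open>\<Sum> z\<^sup>-\<^sup>n\<^sup>-\<^sup>1 B\<^sup>n = P + i Q\<close> of the complexification is
  assembled from the real operators \<open>P\<close> and \<open>Q\<close>.\<close>
lemma not_in_cspectrum: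
  fixes B :: "'a::banach \<Rightarrow>\<^sub>L 'a"
  assumes gz: "gelfand_radius B < cmod z"
  shows "z \<notin> cspectrum B"
proof -
  define r where "r = cmod z"
  have "r > 0" using gz gelfand_radius_nonneg[of B] unfolding r_def by linarith
  then have "z \<noteq> 0" by (auto simp: r_def)
  define v where "v n = 1 / z ^ n" for n
  have v_Suc: "v n = z * v (Suc n)" for n using \<open>z \<noteq> 0\<close> by (simp add: v_def)
  have norm_v: "cmod (v n) = (1 / r) ^ n" for n
    by (simp add: v_def r_def norm_divide norm_power power_one_over)
  have "\<bar>Re (v (Suc n))\<bar> \<le> (1 / r) / r ^ n" "\<bar>Im (v (Suc n))\<bar> \<le> (1 / r) / r ^ n" for n
    using abs_Re_le_cmod[of "v (Suc n)"] abs_Im_le_cmod[of "v (Suc n)"] norm_v[of "Suc n"]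
    by (simp_all add: power_one_over)
  then obtain P Q where
    P: "(\<lambda>n. Re (v (Suc n)) *\<^sub>R blinfun_pow B n) sums P" and
    Q: "(\<lambda>n. Im (v (Suc n)) *\<^sub>R blinfun_pow B n) sums Q"
    using summable_blinfun_power_series[OF gz[folded r_def]] by (meson summable_sums)
  have "(\<lambda>n. Re (v n) *\<^sub>R blinfun_pow B n) sums (Re z *\<^sub>R P - Im z *\<^sub>R Q)"
    using sums_diff[OF sums_scaleR_right[OF P, of "Re z"] sums_scaleR_right[OF Q, of "Im z"]]
    by (subst v_Suc) (simp add: algebra_simps)
  moreover have "(\<lambda>n. Im (v n) *\<^sub>R blinfun_pow B n) sums (Im z *\<^sub>R P + Re z *\<^sub>R Q)"
    using sums_add[OF sums_scaleR_right[OF P, of "Im z"] sums_scaleR_right[OF Q, of "Re z"]]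
    by (subst v_Suc) (simp add: algebra_simps)
  moreover note blinfun_power_series_shift[where c = "\<lambda>n. Re (v n)", OF P]
    blinfun_power_series_shift[where c = "\<lambda>n. Im (v n)", OF Q]
  ultimately have
    "Re z *\<^sub>R P - Im z *\<^sub>R Q = id_blinfun + (B o\<^sub>L P)" "Re z *\<^sub>R P - Im z *\<^sub>R Q = id_blinfun + (P o\<^sub>L B)"
    "Im z *\<^sub>R P + Re z *\<^sub>R Q = B o\<^sub>L Q" "Im z *\<^sub>R P + Re z *\<^sub>R Q = Q o\<^sub>L B"
    by (auto simp: v_def dest: sums_unique2)
  then have BP: "B (P x) = Re z *\<^sub>R P x - Im z *\<^sub>R Q x - x"
    and PB: "P (B x) = Re z *\<^sub>R P x - Im z *\<^sub>R Q x - x"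
    and BQ: "B (Q x) = Im z *\<^sub>R P x + Re z *\<^sub>R Q x"
    and QB: "Q (B x) = Im z *\<^sub>R P x + Re z *\<^sub>R Q x" for x
    by (metis (no_types, lifting) add_diff_cancel_left' blinfun.diff_left blinfun.add_left
          blinfun.scaleR_left blinfun_apply_blinfun_compose blinfun_apply_id_blinfun)+
  define S where "S = (\<lambda>(x, y). (P x - Q y, Q x + P y))"
  have "bounded_linear S" unfolding S_def case_prod_beta
    by (intro bounded_linear_Pair bounded_linear_sub bounded_linear_add
        bounded_linear_compose[OF blinfun.bounded_linear_right] bounded_linear_fst bounded_linear_snd)
  moreover have "S \<circ> cshift B z = id"
    by (auto simp: fun_eq_iff S_def cshift_def blinfun.bilinear_simps PB QB algebra_simps)
  moreover have "cshift B z \<circ> S = id"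
    by (auto simp: fun_eq_iff S_def cshift_def blinfun.bilinear_simps BP BQ algebra_simps)
  ultimately show ?thesis unfolding cspectrum_def by blast
qed

lemma real_inverse_of_not_in_cspectrum:
  fixes B :: "'a::real_normed_vector \<Rightarrow>\<^sub>L 'a"
  assumes "complex_of_real \<rho> \<notin> cspectrum B"
  obtains R where "R o\<^sub>L (\<rho> *\<^sub>R id_blinfun - B) = id_blinfun" "(\<rho> *\<^sub>R id_blinfun - B) o\<^sub>L R = id_blinfun"
proof -
  obtain S where S: "bounded_linear S" "S \<circ> cshift B \<rho> = id" "cshift B \<rho> \<circ> S = id"
    using assms unfolding cspectrum_def by blast
  have cshift_real: "cshift B \<rho> (x, y) = (\<rho> *\<^sub>R x - B x, \<rho> *\<^sub>R y - B y)" for x y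
    by (simp add: cshift_def)
  have "bounded_linear (\<lambda>x. fst (S (x, 0)))"
    by (intro bounded_linear_compose[OF bounded_linear_fst] bounded_linear_compose[OF S(1)]
        bounded_linear_Pair bounded_linear_ident bounded_linear_zero)
  then obtain R :: "'a \<Rightarrow>\<^sub>L 'a" where R: "\<And>x. R x = fst (S (x, 0))"
    using bounded_linear_Blinfun_apply by metis
  show ?thesis
  proof
    show "R o\<^sub>L (\<rho> *\<^sub>R id_blinfun - B) = id_blinfun"
    proof (rule blinfun_eqI)
      fix x
      have "S (cshift B \<rho> (x, 0)) = (x, 0)" using S(2) by (simp add: fun_eq_iff)
      then have "R (\<rho> *\<^sub>R x - B x) = x" by (simp add: R cshift_real)
      moreover have "(\<rho> *\<^sub>R id_blinfun - B) x = \<rho> *\<^sub>R x - B x"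
        by (simp add: blinfun.bilinear_simps)
      ultimately show "(R o\<^sub>L (\<rho> *\<^sub>R id_blinfun - B)) x = id_blinfun x"
        by simp
    qed
    show "(\<rho> *\<^sub>R id_blinfun - B) o\<^sub>L R = id_blinfun"
    proof (rule blinfun_eqI)
      fix x
      obtain a b where ab: "S (x, 0) = (a, b)" by force
      have "cshift B \<rho> (S (x, 0)) = (x, 0)" using S(3) by (simp add: fun_eq_iff)
      then show "((\<rho> *\<^sub>R id_blinfun - B) o\<^sub>L R) x = id_blinfun x"
        by (simp add: R ab cshift_real blinfun.bilinear_simps)
    qed
  qed
qed

section \<open>Uniform boundedness\<close>

lemma norm_blinfun_le_of_ball_bound:
  fixes f :: "'a::real_normed_vector \<Rightarrow>\<^sub>L 'b::real_normed_vector"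
  assumes r: "r > 0" and bound: "\<And>y. norm y < r \<Longrightarrow> norm (f y) \<le> C"
  shows "norm f \<le> 2 * C / r"
proof (rule norm_blinfun_bound)
  have "C \<ge> 0" using bound[of 0] r by (simp add: order_trans[OF norm_ge_zero])
  then show "0 \<le> 2 * C / r" using r by simp
  fix x
  show "norm (f x) \<le> 2 * C / r * norm x"
  proof (cases "x = 0")
    case False
    define c where "c = (r / 2) / norm x"
    have "c > 0" "norm (c *\<^sub>R x) < r" using False r by (simp_all add: c_def)
    then have "c * norm (f x) \<le> C" using bound[of "c *\<^sub>R x"] by (simp add: blinfun.scaleR_right)
    then have "norm (f x) \<le> C / c" using \<open>c > 0\<close> by (simp add: field_simps)
    also have "\<dots> = 2 * C / r * norm x" using False r by (simp add: c_def field_simps)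
    finally show ?thesis .
  qed (simp add: blinfun.bilinear_simps)
qed

lemma uniform_boundedness:
  fixes f :: "nat \<Rightarrow> ('a::banach \<Rightarrow>\<^sub>L 'b::real_normed_vector)"
  assumes pointwise: "\<And>x. \<exists>C. \<forall>n. norm (f n x) \<le> C"
  obtains M where "\<And>n. norm (f n) \<le> M"
proof -
  define E where "E k = {x. \<forall>n. norm (f n x) \<le> real k}" for k :: nat
  have "closed (E k)" for k
  proof -
    have "E k = (\<Inter>n. {x. norm (f n x) \<le> real k})" unfolding E_def by auto
    then show ?thesis by (auto intro!: closed_INT closed_Collect_le continuous_intros)
  qed
  moreover have "\<Union>(range E) = UNIV"
  proof -
    have "\<exists>k. x \<in> E k" for x
    proof -
      obtain C where "\<forall>n. norm (f n x) \<le> C" using pointwise by blast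
      moreover obtain k :: nat where "C \<le> real k" using real_arch_simple by blast
      ultimately show ?thesis unfolding E_def by (auto intro: order_trans)
    qed
    then show ?thesis by blast
  qed
  ultimately have "\<not> (\<forall>k. interior (E k) = {})"
    using Met_TC.metric_Baire_category_alt[of "range E"] by (auto simp: complete_UNIV)
  then obtain k x0 r where r: "r > 0" "ball x0 r \<subseteq> E k"
    by (metis all_not_in_conv open_contains_ball open_interior interior_subset subset_trans)
  have x0: "x0 \<in> E k" using r by auto
  have small: "norm (f n y) \<le> 2 * real k" if "norm y < r" for n y
  proof -
    have "x0 + y \<in> E k" using r that by (auto simp: dist_norm)
    then have "norm (f n (x0 + y)) \<le> real k" unfolding E_def by auto
    moreover have "norm (f n x0) \<le> real k" using x0 unfolding E_def by auto
    moreover have "f n y = f n (x0 + y) - f n x0" by (simp add: blinfun.bilinear_simps)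
    ultimately show ?thesis using norm_triangle_ineq4[of "f n (x0 + y)" "f n x0"] by simp
  qed
  have "norm (f n) \<le> 2 * (2 * real k) / r" for n
    by (rule norm_blinfun_le_of_ball_bound[OF r(1) small])
  then show ?thesis by (rule that)
qed

lemma inverse_power_convex_comb_le:
  fixes l m t s :: real
  assumes l: "l > 0" and m: "m > 0" and t: "0 < t" "t < 1"
  shows "(1 / ((1 - t) * l + t * m)) ^ k
    \<le> (1 - t) * (exp (t * s) * (1 / l) ^ k) + t * (exp (- (1 - t) * s) * (1 / m) ^ k)"
proof -
  have exp_convex_comb: "exp ((1 - t) * a + t * b) \<le> (1 - t) * exp a + t * exp b" for a b
    using convex_onD[OF exp_convex, of t a b] t by simp
  define g where "g = (1 - t) * ln l + t * ln m"
  have "exp g \<le> (1 - t) * l + t * m"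
    using exp_convex_comb[of "ln l" "ln m"] l m by (simp add: g_def)
  then have g: "g \<le> ln ((1 - t) * l + t * m)"
    using l m t by (subst ln_ge_iff) (auto intro: add_pos_pos)
  have "(1 / ((1 - t) * l + t * m)) ^ k = exp (real k * (- ln ((1 - t) * l + t * m)))"
    using l m t by (simp add: exp_of_nat_mult exp_minus inverse_eq_divide power_one_over add_pos_pos)
  also have "\<dots> \<le> exp (real k * (- g))" using g by (intro exp_mono mult_left_mono) auto
  also have "real k * (- g) = (1 - t) * (t * s + real k * ln (1 / l)) + t * (- (1 - t) * s + real k * ln (1 / m))"
    unfolding g_def using l m by (simp add: ln_div algebra_simps)
  also have "exp \<dots> \<le> (1 - t) * exp (t * s + real k * ln (1 / l)) + t * exp (- (1 - t) * s + real k * ln (1 / m))"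
    by (rule exp_convex_comb)
  also have "\<dots> = (1 - t) * (exp (t * s) * (1 / l) ^ k) + t * (exp (- (1 - t) * s) * (1 / m) ^ k)"
    using l m by (simp add: exp_add exp_of_nat_mult)
  finally show ?thesis .
qed

text \<open>The shift \<open>s = n (ln \<eta>\<^sub>2 - ln \<eta>\<^sub>1)\<close> balances \<open>\<eta>\<^sub>1\<^sup>n\<close> and \<open>\<eta>\<^sub>2\<^sup>n\<close> against their weighted geometric mean.\<close>
lemma exp_shift_power_eq_geometric_mean_power:
  fixes \<eta>1 \<eta>2 t :: real and n :: nat
  assumes "\<eta>1 > 0" "\<eta>2 > 0"
  defines "s \<equiv> real n * (ln \<eta>2 - ln \<eta>1)"
  shows "exp (t * s) * \<eta>1 ^ n = (\<eta>1 powr (1 - t) * \<eta>2 powr t) ^ n"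
    and "exp (- (1 - t) * s) * \<eta>2 ^ n = (\<eta>1 powr (1 - t) * \<eta>2 powr t) ^ n"
proof -
  have "(\<eta>1 powr (1 - t) * \<eta>2 powr t) ^ n = exp (real n * ((1 - t) * ln \<eta>1 + t * ln \<eta>2))"
    using assms by (simp add: powr_def exp_add exp_of_nat_mult power_mult_distrib)
  moreover have "\<eta>1 ^ n = exp (real n * ln \<eta>1)" "\<eta>2 ^ n = exp (real n * ln \<eta>2)"
    using assms by (simp_all add: exp_of_nat_mult)
  ultimately show "exp (t * s) * \<eta>1 ^ n = (\<eta>1 powr (1 - t) * \<eta>2 powr t) ^ n"
    and "exp (- (1 - t) * s) * \<eta>2 ^ n = (\<eta>1 powr (1 - t) * \<eta>2 powr t) ^ n"
    by (simp_all add: s_def exp_add[symmetric] algebra_simps)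
qed

lemma convex_comb_greater:
  fixes a l m t :: real
  assumes "a < l" "a < m" "0 < t" "t < 1"
  shows "a < (1 - t) * l + t * m"
proof -
  have "(1 - t) * a < (1 - t) * l" "t * a < t * m" using assms by simp_all
  then show ?thesis by (simp add: algebra_simps)
qed

lemma convex_on_cong_on:
  assumes "convex_on A f" and "\<And>x. x \<in> A \<Longrightarrow> f x = g x"
  shows "convex_on A g"
  using assms convex_on_imp_convex[OF assms(1)] unfolding convex_on_def
  by (metis (no_types, lifting) convexD)

section \<open>Positive operators\<close>

locale normal_generating_cone =
  fixes K :: "'a::banach set"
  assumes cone: "is_cone K" and generating: "generating_cone K" and normal: "normal_cone K"
begin

lemma closed_cone: "closed K"
  using cone by (simp add: is_cone_def)

lemma cone_scaleR: "x \<in> K \<Longrightarrow> a \<ge> 0 \<Longrightarrow> a *\<^sub>R x \<in> K"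
  using cone by (simp add: is_cone_def)

lemma cone_decompose:
  obtains u v where "u \<in> K" "v \<in> K" "x = u - v"
  using generating unfolding generating_cone_def by blast

lemma zero_in_cone: "0 \<in> K"
  by (metis cone_decompose cone_scaleR order_refl scale_zero_left)

lemma cone_add: "x \<in> K \<Longrightarrow> y \<in> K \<Longrightarrow> x + y \<in> K"
proof -
  assume "x \<in> K" "y \<in> K"
  then have "(1/2) *\<^sub>R x + (1/2) *\<^sub>R y \<in> K"
    using cone by (intro convexD) (auto simp: is_cone_def)
  then have "2 *\<^sub>R ((1/2) *\<^sub>R x + (1/2) *\<^sub>R y) \<in> K" by (rule cone_scaleR) simp
  then show ?thesis by (simp add: scaleR_add_right)
qed

lemma cone_sum: "(\<And>i. i \<in> I \<Longrightarrow> f i \<in> K) \<Longrightarrow> sum f I \<in> K"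
  by (induction I rule: infinite_finite_induct) (auto simp: zero_in_cone cone_add)

lemma cone_LIMSEQ: "f \<longlonglongrightarrow> x \<Longrightarrow> (\<And>n. f n \<in> K) \<Longrightarrow> x \<in> K"
  using closed_cone closed_sequentially by blast

definition normality_const :: real where
  "normality_const = (SOME \<gamma>. \<gamma> > 0 \<and> (\<forall>x y. x \<in> K \<and> y - x \<in> K \<longrightarrow> norm x \<le> \<gamma> * norm y))"

lemma normality_const:
  shows normality_const_pos: "normality_const > 0"
    and norm_le_normality_const: "x \<in> K \<Longrightarrow> y - x \<in> K \<Longrightarrow> norm x \<le> normality_const * norm y"
proof -
  have "normality_const > 0 \<and>
      (\<forall>x y. x \<in> K \<and> y - x \<in> K \<longrightarrow> norm x \<le> normality_const * norm y)"
    unfolding normality_const_def by (rule someI_ex) (use normal in \<open>simp add: normal_cone_def\<close>)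
  then show "normality_const > 0" "x \<in> K \<Longrightarrow> y - x \<in> K \<Longrightarrow> norm x \<le> normality_const * norm y"
    by auto
qed

definition pos_op :: "('a \<Rightarrow>\<^sub>L 'a) \<Rightarrow> bool" where
  "pos_op B \<longleftrightarrow> blinfun_apply B ` K \<subseteq> K"

lemma pos_opD: "pos_op B \<Longrightarrow> x \<in> K \<Longrightarrow> B x \<in> K"
  by (auto simp: pos_op_def)

lemma pos_opI: "(\<And>x. x \<in> K \<Longrightarrow> blinfun_apply B x \<in> K) \<Longrightarrow> pos_op B"
  by (auto simp: pos_op_def)

lemma pos_op_id: "pos_op id_blinfun"
  by (rule pos_opI) simp

lemma pos_op_zero: "pos_op 0"
  by (rule pos_opI) (simp add: zero_in_cone)

lemma pos_op_compose: "pos_op B \<Longrightarrow> pos_op C \<Longrightarrow> pos_op (B o\<^sub>L C)"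
  by (rule pos_opI) (simp add: pos_opD)

lemma pos_op_add: "pos_op B \<Longrightarrow> pos_op C \<Longrightarrow> pos_op (B + C)"
  by (rule pos_opI) (simp add: pos_opD cone_add blinfun.add_left)

lemma pos_op_scaleR: "pos_op B \<Longrightarrow> a \<ge> 0 \<Longrightarrow> pos_op (a *\<^sub>R B)"
  by (rule pos_opI) (simp add: pos_opD cone_scaleR blinfun.scaleR_left)

lemma pos_op_pow: "pos_op B \<Longrightarrow> pos_op (blinfun_pow B n)"
  by (induction n) (auto simp: pos_op_id pos_op_compose)

lemma pos_op_sum: "(\<And>i. i \<in> I \<Longrightarrow> pos_op (f i)) \<Longrightarrow> pos_op (sum f I)"
  by (induction I rule: infinite_finite_induct) (auto simp: pos_op_zero pos_op_add)

lemma pos_op_LIMSEQ: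
  assumes "\<And>n. pos_op (f n)" and "f \<longlonglongrightarrow> L"
  shows "pos_op L"
proof (rule pos_opI)
  fix x assume "x \<in> K"
  have "(\<lambda>n. f n x) \<longlonglongrightarrow> L x"
    using assms(2) by (rule bounded_linear.tendsto[OF blinfun.bounded_linear_left])
  then show "L x \<in> K"
  proof (rule cone_LIMSEQ)
    show "f n x \<in> K" for n using assms(1) \<open>x \<in> K\<close> by (rule pos_opD)
  qed
qed

lemma pos_op_suminf:
  assumes "\<And>n. pos_op (f n)" and "f sums S"
  shows "pos_op S"
  using assms(2) unfolding sums_def by (rule pos_op_LIMSEQ[rotated]) (intro pos_op_sum assms(1))

lemma pos_op_resolvent:
  assumes "pos_op B" and "gelfand_radius B < l"
  shows "pos_op (resolvent B l)"
proof (rule pos_op_suminf[OF _ resolvent_sums[OF assms(2)]])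
  have "l > 0" using gelfand_radius_nonneg[of B] assms(2) by linarith
  then show "pos_op ((1 / l) ^ Suc n *\<^sub>R blinfun_pow B n)" for n
    using assms(1) by (simp add: pos_op_scaleR pos_op_pow)
qed

text \<open>Since \<open>K\<close> is generating, bounds on the orbits of the positive vectors are bounds on all
  orbits, and the uniform boundedness principle turns them into bounds on \<open>\<parallel>B\<^sup>n\<parallel>\<close>.\<close>
lemma gelfand_radius_le_of_orbit_bounds:
  assumes \<theta>: "\<theta> > 0"
    and orbit: "\<And>u. u \<in> K \<Longrightarrow> \<exists>C. \<forall>n. norm (blinfun_pow B n u) \<le> C * \<theta> ^ n"
  shows "gelfand_radius B \<le> \<theta>"
proof -
  define f where "f n = (1 / \<theta> ^ n) *\<^sub>R blinfun_pow B n" for n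
  have orbit': "\<exists>C. \<forall>n. norm (f n u) \<le> C" if u: "u \<in> K" for u
  proof -
    obtain C where "\<forall>n. norm (blinfun_pow B n u) \<le> C * \<theta> ^ n" using orbit[OF u] by blast
    then have "norm (f n u) \<le> C" for n
      using \<theta> spec[of _ n] by (simp add: f_def blinfun.scaleR_left divide_le_eq mult.commute)
    then show ?thesis by blast
  qed
  have "\<exists>C. \<forall>n. norm (f n x) \<le> C" for x
  proof -
    obtain u v where "u \<in> K" "v \<in> K" "x = u - v" by (rule cone_decompose)
    moreover obtain Cu Cv where "\<And>n. norm (f n u) \<le> Cu" "\<And>n. norm (f n v) \<le> Cv"
      using orbit' \<open>u \<in> K\<close> \<open>v \<in> K\<close> by metis
    ultimately have "norm (f n x) \<le> Cu + Cv" for n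
      by (metis add_mono blinfun.diff_right norm_triangle_ineq4 order_trans)
    then show ?thesis by blast
  qed
  then obtain M where M: "\<And>n. norm (f n) \<le> M" by (rule uniform_boundedness) auto
  have "norm (blinfun_pow B n) \<le> M * \<theta> ^ n" for n
  proof -
    have "norm (blinfun_pow B n) = \<theta> ^ n * norm (f n)" using \<theta> by (simp add: f_def)
    then show ?thesis using M[of n] \<theta> by (simp add: mult.commute)
  qed
  then show ?thesis by (rule gelfand_radius_le_of_bound[OF \<theta>])
qed

text \<open>Iterating \<open>W = (I + W B) / \<mu>\<close> shows \<open>0 \<le> \<mu>\<^sup>-\<^sup>n\<^sup>-\<^sup>1 B\<^sup>n u \<le> W u\<close> for \<open>u \<in> K\<close>, so normality bounds the orbits.\<close>
lemma gelfand_radius_le_of_pos_left_inverse: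
  assumes B: "pos_op B" and \<mu>: "\<mu> > 0" and W: "pos_op W"
    and inv: "W o\<^sub>L (\<mu> *\<^sub>R id_blinfun - B) = id_blinfun"
  shows "gelfand_radius B \<le> \<mu>"
proof (rule gelfand_radius_le_of_orbit_bounds[OF \<mu>])
  have W_step: "W y = (1 / \<mu>) *\<^sub>R y + (1 / \<mu>) *\<^sub>R W (B y)" for y
  proof -
    have "W (\<mu> *\<^sub>R y - B y) = y"
      using arg_cong[OF inv, of "\<lambda>M. blinfun_apply M y"] by (simp add: blinfun.bilinear_simps)
    then have "\<mu> *\<^sub>R W y = y + W (B y)" by (simp add: blinfun.bilinear_simps algebra_simps)
    then have "(1 / \<mu>) *\<^sub>R (\<mu> *\<^sub>R W y) = (1 / \<mu>) *\<^sub>R (y + W (B y))" by simp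
    then show ?thesis using \<mu> by (simp add: scaleR_add_right)
  qed
  have expand: "W u = (\<Sum>k<n. (1 / \<mu>) ^ Suc k *\<^sub>R blinfun_pow B k u) + (1 / \<mu>) ^ n *\<^sub>R W (blinfun_pow B n u)"
    for n u
  proof (induction n)
    case (Suc n)
    then show ?case
      by (subst (asm) W_step) (simp add: scaleR_add_right algebra_simps blinfun_pow_commute)
  qed simp
  fix u assume u: "u \<in> K"
  have "norm (blinfun_pow B n u) \<le> (normality_const * \<mu> * norm (W u)) * \<mu> ^ n" for n
  proof -
    have "W u - (1 / \<mu>) ^ Suc n *\<^sub>R blinfun_pow B n u
        = (\<Sum>k<n. (1 / \<mu>) ^ Suc k *\<^sub>R blinfun_pow B k u) + (1 / \<mu>) ^ Suc n *\<^sub>R W (blinfun_pow B (Suc n) u)"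
      using expand[of u "Suc n"] by simp
    also have "\<dots> \<in> K"
      using u B W \<mu> by (intro cone_add cone_sum cone_scaleR pos_opD[OF W] pos_opD[OF pos_op_pow]) auto
    finally have "norm ((1 / \<mu>) ^ Suc n *\<^sub>R blinfun_pow B n u) \<le> normality_const * norm (W u)"
      using u B \<mu> by (intro norm_le_normality_const cone_scaleR pos_opD[OF pos_op_pow]) auto
    then show ?thesis using \<mu> by (simp add: field_simps)
  qed
  then show "\<exists>C. \<forall>n. norm (blinfun_pow B n u) \<le> C * \<mu> ^ n" by blast
qed

text \<open>\<open>(l - \<epsilon>) I - B = (l I - B) (I - \<epsilon> W)\<close>, and for small \<open>\<epsilon>\<close> the second factor has a positive
  Neumann inverse.\<close>
lemma gelfand_radius_less_of_pos_inverse: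
  assumes B: "pos_op B" and l: "l > 0" and W: "pos_op W"
    and left: "W o\<^sub>L (l *\<^sub>R id_blinfun - B) = id_blinfun"
    and right: "(l *\<^sub>R id_blinfun - B) o\<^sub>L W = id_blinfun"
  shows "gelfand_radius B < l"
proof -
  define \<epsilon> where "\<epsilon> = min (l / 2) (1 / (2 * norm W + 2))"
  have W2: "2 * norm W + 2 > 0" using norm_ge_zero[of W] by linarith
  then have \<epsilon>: "\<epsilon> > 0" "\<epsilon> < l" using l by (auto simp: \<epsilon>_def)
  define V where "V = \<epsilon> *\<^sub>R W"
  have "\<epsilon> \<le> 1 / (2 * norm W + 2)" by (simp add: \<epsilon>_def)
  from mult_right_mono[OF this norm_ge_zero[of W]]
  have "norm V \<le> norm W / (2 * norm W + 2)" using \<epsilon>(1) by (simp add: V_def)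
  also have "\<dots> \<le> 1/2" by (simp add: pos_divide_le_eq[OF W2])
  finally have "norm V \<le> 1/2" .
  then have "norm (blinfun_pow V n) \<le> 1 * (1/2) ^ n" for n
    using order_trans[OF norm_blinfun_pow_le power_mono[OF \<open>norm V \<le> 1/2\<close> norm_ge_zero]] by simp
  then have "gelfand_radius V \<le> 1/2"
    by (intro gelfand_radius_le_of_bound[where M = 1]) auto
  then have V: "gelfand_radius V < 1" by simp
  have factor: "(l - \<epsilon>) *\<^sub>R id_blinfun - B = (l *\<^sub>R id_blinfun - B) o\<^sub>L (1 *\<^sub>R id_blinfun - V)"
  proof (rule blinfun_eqI)
    fix x
    have "l *\<^sub>R W x - B (W x) = x"
      using arg_cong[OF right, of "\<lambda>M. blinfun_apply M x"] by (simp add: blinfun.bilinear_simps)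
    then show "((l - \<epsilon>) *\<^sub>R id_blinfun - B) x = ((l *\<^sub>R id_blinfun - B) o\<^sub>L (1 *\<^sub>R id_blinfun - V)) x"
      by (simp add: V_def blinfun.bilinear_simps algebra_simps)
  qed
  have "(resolvent V 1 o\<^sub>L W) o\<^sub>L ((l - \<epsilon>) *\<^sub>R id_blinfun - B)
      = resolvent V 1 o\<^sub>L (W o\<^sub>L (l *\<^sub>R id_blinfun - B)) o\<^sub>L (1 *\<^sub>R id_blinfun - V)"
    unfolding factor by (simp add: blinfun_compose_assoc)
  then have "(resolvent V 1 o\<^sub>L W) o\<^sub>L ((l - \<epsilon>) *\<^sub>R id_blinfun - B) = id_blinfun"
    using resolvent_inverse(1)[OF V] by (simp add: left)
  moreover have "pos_op (resolvent V 1 o\<^sub>L W)"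
    using W V \<epsilon>(1) unfolding V_def by (intro pos_op_compose pos_op_resolvent pos_op_scaleR) auto
  ultimately have "gelfand_radius B \<le> l - \<epsilon>"
    using \<epsilon> B by (intro gelfand_radius_le_of_pos_left_inverse) auto
  then show ?thesis using \<epsilon> by simp
qed

text \<open>Otherwise \<open>(\<rho> I - B)\<^sup>-\<^sup>1\<close>, \<open>\<rho> = r(B)\<close>, would be the limit of the positive resolvents at \<open>\<rho> + \<delta>\<close>,
  hence positive, which forces \<open>r(B) < \<rho>\<close>.\<close>
lemma gelfand_radius_in_cspectrum:
  assumes B: "pos_op B" and pos: "gelfand_radius B > 0"
  shows "complex_of_real (gelfand_radius B) \<in> cspectrum B"
proof (rule ccontr)
  define \<rho> where "\<rho> = gelfand_radius B"
  assume "complex_of_real (gelfand_radius B) \<notin> cspectrum B"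
  then obtain R where left: "R o\<^sub>L (\<rho> *\<^sub>R id_blinfun - B) = id_blinfun"
    and right: "(\<rho> *\<^sub>R id_blinfun - B) o\<^sub>L R = id_blinfun"
    unfolding \<rho>_def by (rule real_inverse_of_not_in_cspectrum)
  define c where "c = 1 / (2 * norm R + 2)"
  define \<delta> where "\<delta> n = c / real (Suc n)" for n
  have "2 * norm R + 2 > 0" using norm_ge_zero[of R] by linarith
  then have c: "c > 0" "c * norm R \<le> 1/2" by (simp_all add: c_def pos_divide_le_eq)
  have \<delta>: "\<delta> n > 0" "\<delta> n * norm R \<le> 1/2" for n
  proof -
    show "\<delta> n > 0" using c by (simp add: \<delta>_def)
    have "\<delta> n \<le> c" using c by (simp add: \<delta>_def divide_le_eq)
    then show "\<delta> n * norm R \<le> 1/2" using c(2) mult_right_mono[OF _ norm_ge_zero[of R]] by force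
  qed
  have "(\<lambda>n. resolvent B (\<rho> + \<delta> n)) \<longlonglongrightarrow> R"
  proof (rule LIM_zero_cancel, rule Lim_null_comparison)
    have "gelfand_radius B < \<rho> + \<delta> n" for n using \<delta>(1)[of n] by (simp add: \<rho>_def)
    then show "\<forall>\<^sub>F n in sequentially. norm (resolvent B (\<rho> + \<delta> n) - R) \<le> 2 * \<delta> n * norm R ^ 2"
      using \<delta> by (intro always_eventually allI norm_inverse_shift_diff_le[OF right resolvent_inverse(1)])
        (auto simp: less_imp_le)
    have "\<delta> \<longlonglongrightarrow> 0" unfolding \<delta>_def by (rule LIMSEQ_Suc[OF lim_const_over_n])
    then show "(\<lambda>n. 2 * \<delta> n * norm R ^ 2) \<longlonglongrightarrow> 0"
      by (intro tendsto_mult_right_zero tendsto_mult_left_zero)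
  qed
  then have "pos_op R"
    using \<delta>(1) pos by (intro pos_op_LIMSEQ[OF pos_op_resolvent[OF B]]) (auto simp: \<rho>_def)
  then have "gelfand_radius B < \<rho>"
    using pos by (intro gelfand_radius_less_of_pos_inverse[OF B _ _ left right]) (auto simp: \<rho>_def)
  then show False by (simp add: \<rho>_def)
qed

lemma spec_rad_eq_gelfand_radius:
  assumes B: "pos_op B"
  shows "spec_rad B = gelfand_radius B"
proof -
  have bound: "s \<le> gelfand_radius B" if "s \<in> insert 0 (cmod ` cspectrum B)" for s
    using that not_in_cspectrum[of B] gelfand_radius_nonneg[of B] by force
  moreover have "gelfand_radius B \<in> insert 0 (cmod ` cspectrum B)"
    using gelfand_radius_in_cspectrum[OF B] gelfand_radius_nonneg[of B]
    by (cases "gelfand_radius B = 0") (auto intro!: image_eqI[where x = "complex_of_real (gelfand_radius B)"])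
  ultimately show ?thesis
    unfolding spec_rad_def by (intro antisym cSup_least cSup_upper bdd_aboveI[of _ "gelfand_radius B"]) auto
qed

lemma pos_op_pow_diff:
  assumes B: "pos_op B" and CB: "pos_op (C - B)"
  shows "pos_op (blinfun_pow C n - blinfun_pow B n)"
proof (induction n)
  case 0
  then show ?case by (simp add: pos_op_zero)
next
  case (Suc n)
  have C: "pos_op C" using pos_op_add[OF CB B] by simp
  have "blinfun_pow C (Suc n) - blinfun_pow B (Suc n)
      = (C o\<^sub>L (blinfun_pow C n - blinfun_pow B n)) + ((C - B) o\<^sub>L blinfun_pow B n)"
    by (rule blinfun_eqI) (simp add: blinfun.bilinear_simps)
  then show ?case
    using Suc C CB B by (simp add: pos_op_add pos_op_compose pos_op_pow)
qed

lemma gelfand_radius_mono: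
  assumes B: "pos_op B" and CB: "pos_op (C - B)"
  shows "gelfand_radius B \<le> gelfand_radius C"
proof (rule dense_ge)
  fix \<eta> assume \<eta>: "gelfand_radius C < \<eta>"
  then have "\<eta> > 0" using gelfand_radius_nonneg[of C] by linarith
  obtain M where M: "\<And>n. norm (blinfun_pow C n) \<le> M * \<eta> ^ n"
    using norm_blinfun_pow_bound[OF \<eta>] by blast
  show "gelfand_radius B \<le> \<eta>"
  proof (rule gelfand_radius_le_of_orbit_bounds[OF \<open>\<eta> > 0\<close>])
    fix u assume u: "u \<in> K"
    have "norm (blinfun_pow B n u) \<le> (normality_const * M * norm u) * \<eta> ^ n" for n
    proof -
      have "norm (blinfun_pow B n u) \<le> normality_const * norm (blinfun_pow C n u)"
        using pos_opD[OF pos_op_pow[OF B] u] pos_opD[OF pos_op_pow_diff[OF B CB] u]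
        by (intro norm_le_normality_const) (simp_all add: blinfun.diff_left)
      also have "\<dots> \<le> normality_const * ((M * \<eta> ^ n) * norm u)"
        using normality_const_pos M
        by (intro mult_left_mono order_trans[OF norm_blinfun mult_right_mono]) auto
      finally show ?thesis by (simp add: algebra_simps)
    qed
    then show "\<exists>C. \<forall>n. norm (blinfun_pow B n u) \<le> C * \<eta> ^ n" by blast
  qed
qed

section \<open>The operators \<open>F (l I - T)\<^sup>-\<^sup>1\<close>\<close>

text \<open>Resolvent identity: \<open>R(l\<^sub>1) - R(l\<^sub>2) = (l\<^sub>2 - l\<^sub>1) R(l\<^sub>1) R(l\<^sub>2)\<close>.\<close>
lemma pos_op_resolvent_diff:
  assumes T: "pos_op T" and l1: "gelfand_radius T < l1" and l12: "l1 \<le> l2"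
  shows "pos_op (resolvent T l1 - resolvent T l2)"
proof -
  have l2: "gelfand_radius T < l2" using l1 l12 by linarith
  have "resolvent T l1 - resolvent T l2
      = (resolvent T l1 o\<^sub>L ((l2 *\<^sub>R id_blinfun - T) o\<^sub>L resolvent T l2))
        - ((resolvent T l1 o\<^sub>L (l1 *\<^sub>R id_blinfun - T)) o\<^sub>L resolvent T l2)"
    by (simp add: resolvent_inverse l1 l2)
  also have "\<dots> = (l2 - l1) *\<^sub>R (resolvent T l1 o\<^sub>L resolvent T l2)"
    by (rule blinfun_eqI) (simp add: blinfun.bilinear_simps algebra_simps)
  finally show ?thesis
    using l12 by (simp add: pos_op_scaleR pos_op_compose pos_op_resolvent T l1 l2)
qed

lemma pos_op_FR:
  "pos_op T \<Longrightarrow> pos_op F \<Longrightarrow> gelfand_radius T < l \<Longrightarrow> pos_op (FR F T l)"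
  by (simp add: FR_eq_resolvent pos_op_compose pos_op_resolvent)

lemma gelfand_radius_FR_antimono:
  assumes T: "pos_op T" and F: "pos_op F" and l1: "gelfand_radius T < l1" and l12: "l1 \<le> l2"
  shows "gelfand_radius (FR F T l2) \<le> gelfand_radius (FR F T l1)"
proof (rule gelfand_radius_mono)
  have l2: "gelfand_radius T < l2" using l1 l12 by linarith
  show "pos_op (FR F T l2)" using T F l2 by (rule pos_op_FR)
  have "FR F T l1 - FR F T l2 = F o\<^sub>L (resolvent T l1 - resolvent T l2)"
    by (simp add: FR_eq_resolvent l1 l2 blinfun_compose_diff_right)
  then show "pos_op (FR F T l1 - FR F T l2)"
    using pos_op_compose[OF F pos_op_resolvent_diff[OF T l1 l12]] by simp
qed

text \<open>Both directions rest on the factorisation \<open>l I - (T + F) = (I - F R) (l I - T)\<close>,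
  \<open>R = (l I - T)\<^sup>-\<^sup>1\<close>, whose factors have positive inverses exactly when \<open>r(T + F) < l\<close>.\<close>
lemma gelfand_radius_FR_less_one_iff:
  assumes T: "pos_op T" and F: "pos_op F" and l: "gelfand_radius T < l"
  shows "gelfand_radius (FR F T l) < 1 \<longleftrightarrow> gelfand_radius (T + F) < l"
proof -
  have "l > 0" using gelfand_radius_nonneg[of T] l by linarith
  define R where "R = resolvent T l"
  have R: "R o\<^sub>L (l *\<^sub>R id_blinfun - T) = id_blinfun" "(l *\<^sub>R id_blinfun - T) o\<^sub>L R = id_blinfun"
    unfolding R_def using l by (rule resolvent_inverse)+
  have pos_R: "pos_op R" unfolding R_def using T l by (rule pos_op_resolvent)
  have FR: "FR F T l = F o\<^sub>L R" unfolding R_def using l by (rule FR_eq_resolvent)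
  have factor: "l *\<^sub>R id_blinfun - (T + F) = (1 *\<^sub>R id_blinfun - (F o\<^sub>L R)) o\<^sub>L (l *\<^sub>R id_blinfun - T)"
    using R(1) by (simp add: blinfun_compose_diff_left blinfun_compose_assoc algebra_simps)
  show ?thesis
  proof
    assume "gelfand_radius (FR F T l) < 1"
    then have B: "gelfand_radius (F o\<^sub>L R) < 1" by (simp add: FR)
    note N = resolvent_inverse[OF B]
    show "gelfand_radius (T + F) < l"
    proof (rule gelfand_radius_less_of_pos_inverse)
      show "pos_op (R o\<^sub>L resolvent (F o\<^sub>L R) 1)"
        using F pos_R B by (intro pos_op_compose pos_op_resolvent) auto
    qed (use T F \<open>l > 0\<close> blinfun_compose_inverse[OF N R] in \<open>simp_all add: factor pos_op_add\<close>)
  next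
    assume A: "gelfand_radius (T + F) < l"
    note RA = resolvent_inverse[OF A]
    have "1 *\<^sub>R id_blinfun - (F o\<^sub>L R) = (l *\<^sub>R id_blinfun - (T + F)) o\<^sub>L R"
      using R(2) by (simp add: factor blinfun_compose_assoc)
    moreover have "(l *\<^sub>R id_blinfun - T) o\<^sub>L resolvent (T + F) l = id_blinfun + (F o\<^sub>L resolvent (T + F) l)"
      using RA(2) blinfun_compose_add_left[of "l *\<^sub>R id_blinfun - (T + F)" F "resolvent (T + F) l"]
      by (simp add: algebra_simps)
    ultimately have "(id_blinfun + (F o\<^sub>L resolvent (T + F) l)) o\<^sub>L (1 *\<^sub>R id_blinfun - FR F T l) = id_blinfun"
      "(1 *\<^sub>R id_blinfun - FR F T l) o\<^sub>L (id_blinfun + (F o\<^sub>L resolvent (T + F) l)) = id_blinfun"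
      using blinfun_compose_inverse[OF RA R(2,1)] by (simp_all add: FR)
    moreover have "pos_op (id_blinfun + (F o\<^sub>L resolvent (T + F) l))"
      using T F A by (intro pos_op_add pos_op_id pos_op_compose pos_op_resolvent) auto
    ultimately show "gelfand_radius (FR F T l) < 1"
      by (intro gelfand_radius_less_of_pos_inverse[OF pos_op_FR[OF T F l] zero_less_one])
  qed
qed

section \<open>Convexity\<close>

text \<open>Polynomials in \<open>1/v\<close> with positive operator coefficients; the powers of the truncations
  of \<open>F (v I - T)\<^sup>-\<^sup>1 = \<Sum> v\<^sup>-\<^sup>k\<^sup>-\<^sup>1 F T\<^sup>k\<close> are of this form.\<close>
inductive pos_coeff_poly :: "(real \<Rightarrow> 'a \<Rightarrow>\<^sub>L 'a) \<Rightarrow> bool" where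
  zero: "pos_coeff_poly (\<lambda>_. 0)"
| monom: "pos_op C \<Longrightarrow> pos_coeff_poly (\<lambda>v. (1 / v) ^ k *\<^sub>R C)"
| add: "pos_coeff_poly P \<Longrightarrow> pos_coeff_poly Q \<Longrightarrow> pos_coeff_poly (\<lambda>v. P v + Q v)"

lemma pos_coeff_poly_compose:
  assumes "pos_coeff_poly P" and "pos_coeff_poly Q"
  shows "pos_coeff_poly (\<lambda>v. P v o\<^sub>L Q v)"
  using assms(1)
proof induction
  case zero
  then show ?case by (simp add: pos_coeff_poly.zero)
next
  case (monom C k)
  from assms(2) show ?case
  proof induction
    case zero
    then show ?case by (simp add: pos_coeff_poly.zero)
  next
    case (monom D j)
    have "(\<lambda>v. ((1 / v) ^ k *\<^sub>R C) o\<^sub>L ((1 / v) ^ j *\<^sub>R D)) = (\<lambda>v. (1 / v) ^ (k + j) *\<^sub>R (C o\<^sub>L D))"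
      by (intro ext blinfun_eqI) (simp add: blinfun.bilinear_simps power_add)
    then show ?case using \<open>pos_op C\<close> \<open>pos_op D\<close> by (simp add: pos_coeff_poly.monom pos_op_compose)
  next
    case (add P Q)
    have "(\<lambda>v. ((1 / v) ^ k *\<^sub>R C) o\<^sub>L (P v + Q v))
        = (\<lambda>v. (((1 / v) ^ k *\<^sub>R C) o\<^sub>L P v) + (((1 / v) ^ k *\<^sub>R C) o\<^sub>L Q v))"
      by (intro ext blinfun_eqI) (simp add: blinfun.bilinear_simps)
    then show ?case using add.IH by (simp add: pos_coeff_poly.add)
  qed
next
  case (add P1 P2)
  then show ?case by (simp add: blinfun_compose_add_left pos_coeff_poly.add)
qed

lemma pos_coeff_poly_pow: "pos_coeff_poly P \<Longrightarrow> pos_coeff_poly (\<lambda>v. blinfun_pow (P v) n)"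
proof (induction n)
  case 0
  have "pos_coeff_poly (\<lambda>v. (1 / v) ^ 0 *\<^sub>R id_blinfun)" by (intro pos_coeff_poly.monom pos_op_id)
  then show ?case by simp
next
  case (Suc n)
  then show ?case by (simp add: pos_coeff_poly_compose)
qed

lemma pos_coeff_poly_partial_FR:
  assumes T: "pos_op T" and F: "pos_op F"
  shows "pos_coeff_poly (\<lambda>v. F o\<^sub>L (\<Sum>k<M. (1 / v) ^ Suc k *\<^sub>R blinfun_pow T k))"
proof (induction M)
  case 0
  then show ?case by (simp add: pos_coeff_poly.zero)
next
  case (Suc M)
  have "(\<lambda>v. F o\<^sub>L (\<Sum>k<Suc M. (1 / v) ^ Suc k *\<^sub>R blinfun_pow T k))
      = (\<lambda>v. (F o\<^sub>L (\<Sum>k<M. (1 / v) ^ Suc k *\<^sub>R blinfun_pow T k)) + (1 / v) ^ Suc M *\<^sub>R (F o\<^sub>L blinfun_pow T M))"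
    by (intro ext blinfun_eqI) (simp add: blinfun.bilinear_simps)
  then show ?case
    by (simp only:) (intro pos_coeff_poly.add[OF Suc] pos_coeff_poly.monom pos_op_compose pos_op_pow T F)
qed

lemma pos_coeff_poly_convex_comb:
  assumes "pos_coeff_poly P" and u: "u \<in> K" and l: "l > 0" and m: "m > 0" and t: "0 < t" "t < 1"
  shows "((1 - t) * exp (t * s)) *\<^sub>R P l u + (t * exp (- (1 - t) * s)) *\<^sub>R P m u
    - P ((1 - t) * l + t * m) u \<in> K"
  using assms(1)
proof induction
  case zero
  then show ?case by (simp add: zero_in_cone)
next
  case (monom C k)
  define c where "c = (1 - t) * (exp (t * s) * (1 / l) ^ k) + t * (exp (- (1 - t) * s) * (1 / m) ^ k)
    - (1 / ((1 - t) * l + t * m)) ^ k"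
  have "c \<ge> 0" using inverse_power_convex_comb_le[OF l m t, of k s] by (simp add: c_def)
  then have "c *\<^sub>R C u \<in> K" using monom u by (simp add: cone_scaleR pos_opD)
  then show ?case by (simp add: c_def blinfun.scaleR_left algebra_simps)
next
  case (add P Q)
  let ?a = "(1 - t) * exp (t * s)" and ?b = "t * exp (- (1 - t) * s)" and ?\<nu> = "(1 - t) * l + t * m"
  have "(?a *\<^sub>R P l u + ?b *\<^sub>R P m u - P ?\<nu> u) + (?a *\<^sub>R Q l u + ?b *\<^sub>R Q m u - Q ?\<nu> u) \<in> K"
    using add.IH by (rule cone_add)
  moreover have "a *\<^sub>R (x1 + x2) + b *\<^sub>R (y1 + y2) - (z1 + z2)
      = (a *\<^sub>R x1 + b *\<^sub>R y1 - z1) + (a *\<^sub>R x2 + b *\<^sub>R y2 - z2)" for a b and x1 x2 y1 y2 z1 z2 :: 'a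
    by (simp add: algebra_simps)
  ultimately show ?case by (simp only: blinfun.add_left)
qed

lemma FR_pow_convex_comb_in_cone:
  assumes T: "pos_op T" and F: "pos_op F" and l: "gelfand_radius T < l" and m: "gelfand_radius T < m"
    and t: "0 < t" "t < 1" and u: "u \<in> K"
  shows "((1 - t) * exp (t * s)) *\<^sub>R blinfun_pow (FR F T l) n u + (t * exp (- (1 - t) * s)) *\<^sub>R blinfun_pow (FR F T m) n u
    - blinfun_pow (FR F T ((1 - t) * l + t * m)) n u \<in> K"
proof (rule cone_LIMSEQ)
  have "l > 0" "m > 0" using gelfand_radius_nonneg[of T] l m by linarith+
  let ?P = "\<lambda>M v. blinfun_pow (F o\<^sub>L (\<Sum>k<M. (1 / v) ^ Suc k *\<^sub>R blinfun_pow T k)) n"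
  show "((1 - t) * exp (t * s)) *\<^sub>R ?P M l u + (t * exp (- (1 - t) * s)) *\<^sub>R ?P M m u
      - ?P M ((1 - t) * l + t * m) u \<in> K" for M
    using pos_coeff_poly_pow[OF pos_coeff_poly_partial_FR[OF T F]] u \<open>l > 0\<close> \<open>m > 0\<close> t
    by (rule pos_coeff_poly_convex_comb)
  show "(\<lambda>M. ((1 - t) * exp (t * s)) *\<^sub>R ?P M l u + (t * exp (- (1 - t) * s)) *\<^sub>R ?P M m u
      - ?P M ((1 - t) * l + t * m) u) \<longlonglongrightarrow>
      ((1 - t) * exp (t * s)) *\<^sub>R blinfun_pow (FR F T l) n u + (t * exp (- (1 - t) * s)) *\<^sub>R blinfun_pow (FR F T m) n u
      - blinfun_pow (FR F T ((1 - t) * l + t * m)) n u"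
    using l m t by (intro tendsto_intros tendsto_partial_FR_pow convex_comb_greater)
qed

lemma gelfand_radius_FR_le_geometric_mean:
  assumes T: "pos_op T" and F: "pos_op F" and l: "gelfand_radius T < l" and m: "gelfand_radius T < m"
    and t: "0 < t" "t < 1"
    and \<eta>1: "gelfand_radius (FR F T l) < \<eta>1" and \<eta>2: "gelfand_radius (FR F T m) < \<eta>2"
  shows "gelfand_radius (FR F T ((1 - t) * l + t * m)) \<le> \<eta>1 powr (1 - t) * \<eta>2 powr t"
proof (rule gelfand_radius_le_of_orbit_bounds)
  have "\<eta>1 > 0" "\<eta>2 > 0"
    using \<eta>1 \<eta>2 gelfand_radius_nonneg[of "FR F T l"] gelfand_radius_nonneg[of "FR F T m"] by linarith+
  then show "\<eta>1 powr (1 - t) * \<eta>2 powr t > 0" by simp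
  define \<theta> where "\<theta> = \<eta>1 powr (1 - t) * \<eta>2 powr t"
  obtain C1 where C1: "\<And>n. norm (blinfun_pow (FR F T l) n) \<le> C1 * \<eta>1 ^ n"
    using norm_blinfun_pow_bound[OF \<eta>1] by blast
  obtain C2 where C2: "\<And>n. norm (blinfun_pow (FR F T m) n) \<le> C2 * \<eta>2 ^ n"
    using norm_blinfun_pow_bound[OF \<eta>2] by blast
  fix u assume u: "u \<in> K"
  have "norm (blinfun_pow (FR F T ((1 - t) * l + t * m)) n u)
      \<le> (normality_const * ((1 - t) * C1 + t * C2) * norm u) * \<theta> ^ n" for n
  proof -
    define s where "s = real n * (ln \<eta>2 - ln \<eta>1)"
    define a b where "a = (1 - t) * exp (t * s)" and "b = t * exp (- (1 - t) * s)"
    have "a \<ge> 0" "b \<ge> 0" using t by (auto simp: a_def b_def)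
    have "a * \<eta>1 ^ n = (1 - t) * \<theta> ^ n" "b * \<eta>2 ^ n = t * \<theta> ^ n"
      using exp_shift_power_eq_geometric_mean_power[OF \<open>\<eta>1 > 0\<close> \<open>\<eta>2 > 0\<close>, of t n]
      by (simp_all add: a_def b_def s_def \<theta>_def mult.assoc)
    have "norm (blinfun_pow (FR F T ((1 - t) * l + t * m)) n u)
        \<le> normality_const * norm (a *\<^sub>R blinfun_pow (FR F T l) n u + b *\<^sub>R blinfun_pow (FR F T m) n u)"
      using pos_opD[OF pos_op_pow[OF pos_op_FR[OF T F convex_comb_greater[OF l m t]]] u, of n]
        FR_pow_convex_comb_in_cone[OF T F l m t u, of s n, folded a_def b_def]
      by (rule norm_le_normality_const)
    also have "\<dots> \<le> normality_const * (a * (C1 * \<eta>1 ^ n * norm u) + b * (C2 * \<eta>2 ^ n * norm u))"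
      using \<open>a \<ge> 0\<close> \<open>b \<ge> 0\<close> normality_const_pos C1 C2
      by (intro mult_left_mono order_trans[OF norm_triangle_ineq] add_mono)
        (auto intro!: mult_left_mono order_trans[OF norm_blinfun] mult_right_mono)
    also have "\<dots> = normality_const * (C1 * norm u * (a * \<eta>1 ^ n) + C2 * norm u * (b * \<eta>2 ^ n))"
      by (simp only: mult_ac)
    also have "\<dots> = normality_const * ((1 - t) * C1 + t * C2) * norm u * \<theta> ^ n"
      unfolding \<open>a * \<eta>1 ^ n = (1 - t) * \<theta> ^ n\<close> \<open>b * \<eta>2 ^ n = t * \<theta> ^ n\<close>
      by (simp add: algebra_simps)
    finally show ?thesis by (simp add: mult.assoc)
  qed
  then show "\<exists>C. \<forall>n. norm (blinfun_pow (FR F T ((1 - t) * l + t * m)) n u)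
      \<le> C * (\<eta>1 powr (1 - t) * \<eta>2 powr t) ^ n"
    unfolding \<theta>_def by blast
qed

lemma convex_on_gelfand_radius_FR:
  assumes T: "pos_op T" and F: "pos_op F"
  shows "convex_on {gelfand_radius T<..} (\<lambda>l. gelfand_radius (FR F T l))"
proof (rule convex_onI)
  fix t l m :: real
  assume t: "0 < t" "t < 1" and "l \<in> {gelfand_radius T<..}" "m \<in> {gelfand_radius T<..}"
  then have l: "gelfand_radius T < l" and m: "gelfand_radius T < m" by auto
  show "gelfand_radius (FR F T ((1 - t) *\<^sub>R l + t *\<^sub>R m))
      \<le> (1 - t) * gelfand_radius (FR F T l) + t * gelfand_radius (FR F T m)"
  proof (rule field_le_epsilon)
    fix e :: real assume "e > 0"
    define \<eta>1 \<eta>2 where "\<eta>1 = gelfand_radius (FR F T l) + e" and "\<eta>2 = gelfand_radius (FR F T m) + e"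
    have "gelfand_radius (FR F T ((1 - t) * l + t * m)) \<le> \<eta>1 powr (1 - t) * \<eta>2 powr t"
      using \<open>e > 0\<close> by (intro gelfand_radius_FR_le_geometric_mean[OF T F l m t]) (auto simp: \<eta>1_def \<eta>2_def)
    also have "\<dots> \<le> (1 - t) * \<eta>1 + t * \<eta>2"
      using t \<open>e > 0\<close> gelfand_radius_nonneg[of "FR F T l"] gelfand_radius_nonneg[of "FR F T m"]
      by (intro Youngs_inequality_0) (auto simp: \<eta>1_def \<eta>2_def add_nonneg_pos)
    finally show "gelfand_radius (FR F T ((1 - t) *\<^sub>R l + t *\<^sub>R m))
        \<le> (1 - t) * gelfand_radius (FR F T l) + t * gelfand_radius (FR F T m) + e"
      by (simp add: \<eta>1_def \<eta>2_def algebra_simps)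
  qed
qed simp

section \<open>The dichotomy\<close>

lemma gelfand_radius_le_sum:
  "pos_op T \<Longrightarrow> pos_op F \<Longrightarrow> gelfand_radius T \<le> gelfand_radius (T + F)"
  by (rule gelfand_radius_mono) simp_all

lemma gelfand_radius_FR_at_sum:
  assumes T: "pos_op T" and F: "pos_op F" and less: "gelfand_radius T < gelfand_radius (T + F)"
  shows "gelfand_radius (FR F T (gelfand_radius (T + F))) = 1"
proof (rule antisym)
  define a where "a = gelfand_radius (T + F)"
  define \<phi> where "\<phi> l = gelfand_radius (FR F T l)" for l
  have "continuous_on {gelfand_radius T<..} \<phi>"
    unfolding \<phi>_def by (intro convex_on_continuous convex_on_gelfand_radius_FR T F) simp
  then have "isCont \<phi> a"
    using less by (simp add: continuous_on_eq_continuous_at a_def)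
  then have "(\<phi> \<longlongrightarrow> \<phi> a) (at_right a)"
    by (simp add: isCont_def filterlim_at_split)
  moreover have "\<forall>\<^sub>F l in at_right a. \<phi> l \<le> 1"
    using eventually_at_right_less[of a]
  proof (rule eventually_mono)
    fix l assume "a < l"
    then show "\<phi> l \<le> 1"
      using gelfand_radius_FR_less_one_iff[OF T F, of l] less by (simp add: \<phi>_def a_def)
  qed
  ultimately have "\<phi> a \<le> 1" by (intro tendsto_upperbound) auto
  then show "gelfand_radius (FR F T (gelfand_radius (T + F))) \<le> 1" by (simp add: \<phi>_def a_def)
  show "1 \<le> gelfand_radius (FR F T (gelfand_radius (T + F)))"
    using gelfand_radius_FR_less_one_iff[OF T F less] by simp
qed

lemma gelfand_radius_FR_less_one_everywhere_iff:
  assumes T: "pos_op T" and F: "pos_op F"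
  shows "(\<forall>l>gelfand_radius T. gelfand_radius (FR F T l) < 1) \<longleftrightarrow> gelfand_radius (T + F) \<le> gelfand_radius T"
proof
  assume all: "\<forall>l>gelfand_radius T. gelfand_radius (FR F T l) < 1"
  show "gelfand_radius (T + F) \<le> gelfand_radius T"
  proof (rule ccontr)
    assume "\<not> gelfand_radius (T + F) \<le> gelfand_radius T"
    then have less: "gelfand_radius T < gelfand_radius (T + F)" by simp
    then show False
      using all gelfand_radius_FR_less_one_iff[OF T F less] by simp
  qed
qed (use gelfand_radius_FR_less_one_iff[OF T F] in auto)

lemma gelfand_radius_FR_crosses_one_iff:
  assumes T: "pos_op T" and F: "pos_op F"
  shows "(\<exists>l1 l2. gelfand_radius T < l1 \<and> l1 < l2 \<and>
      gelfand_radius (FR F T l1) \<ge> 1 \<and> gelfand_radius (FR F T l2) < 1)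
    \<longleftrightarrow> gelfand_radius T < gelfand_radius (T + F)"
proof
  assume "\<exists>l1 l2. gelfand_radius T < l1 \<and> l1 < l2 \<and>
      gelfand_radius (FR F T l1) \<ge> 1 \<and> gelfand_radius (FR F T l2) < 1"
  then obtain l1 where l1: "gelfand_radius T < l1" "gelfand_radius (FR F T l1) \<ge> 1" by blast
  then show "gelfand_radius T < gelfand_radius (T + F)"
    using gelfand_radius_FR_less_one_iff[OF T F l1(1)] by linarith
next
  assume less: "gelfand_radius T < gelfand_radius (T + F)"
  then have "gelfand_radius T < gelfand_radius (T + F) + 1" by simp
  then show "\<exists>l1 l2. gelfand_radius T < l1 \<and> l1 < l2 \<and>
      gelfand_radius (FR F T l1) \<ge> 1 \<and> gelfand_radius (FR F T l2) < 1"
    using less gelfand_radius_FR_less_one_iff[OF T F less]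
      gelfand_radius_FR_less_one_iff[OF T F \<open>gelfand_radius T < gelfand_radius (T + F) + 1\<close>]
    by (intro exI[of _ "gelfand_radius (T + F)"] exI[of _ "gelfand_radius (T + F) + 1"]) auto
qed

end

theorem corollary2p8:
  fixes K :: "'a::banach set" and A T F :: "'a \<Rightarrow>\<^sub>L 'a"
  assumes cone: "is_cone K" and gen: "generating_cone K" and nor: "normal_cone K"
    and A_pos: "blinfun_apply A ` K \<subseteq> K"
    and split: "A = T + F"
    and T_pos: "blinfun_apply T ` K \<subseteq> K"
    and F_pos: "blinfun_apply F ` K \<subseteq> K"
    and rT: "spec_rad T < 1"
  shows "(\<forall>l1 l2. spec_rad T < l1 \<and> l1 \<le> l2 \<longrightarrow>
              spec_rad (FR F T l2) \<le> spec_rad (FR F T l1))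
    \<and> convex_on {spec_rad T<..} (\<lambda>l. spec_rad (FR F T l))
    \<and> ((\<forall>l>spec_rad T. spec_rad (FR F T l) < 1) \<noteq>
       (\<exists>l1 l2. spec_rad T < l1 \<and> l1 < l2 \<and>
              spec_rad (FR F T l1) \<ge> 1 \<and> spec_rad (FR F T l2) < 1))
    \<and> ((\<forall>l>spec_rad T. spec_rad (FR F T l) < 1) \<longrightarrow> spec_rad A = spec_rad T)
    \<and> ((\<exists>l1 l2. spec_rad T < l1 \<and> l1 < l2 \<and>
              spec_rad (FR F T l1) \<ge> 1 \<and> spec_rad (FR F T l2) < 1) \<longrightarrow>
        spec_rad A > spec_rad T \<and> spec_rad (FR F T (spec_rad A)) = 1)"
proof -
  interpret normal_generating_cone K using cone gen nor by unfold_locales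
  have T: "pos_op T" and F: "pos_op F" using T_pos F_pos by (simp_all add: pos_op_def)
  have r_T: "spec_rad T = gelfand_radius T" and r_A: "spec_rad A = gelfand_radius (T + F)"
    using spec_rad_eq_gelfand_radius[OF T] spec_rad_eq_gelfand_radius[OF pos_op_add[OF T F]] split
    by simp_all
  have r_FR: "spec_rad (FR F T l) = gelfand_radius (FR F T l)" if "gelfand_radius T < l" for l
    using spec_rad_eq_gelfand_radius[OF pos_op_FR[OF T F that]] .
  have case1: "(\<forall>l>spec_rad T. spec_rad (FR F T l) < 1) \<longleftrightarrow> gelfand_radius (T + F) \<le> gelfand_radius T"
    unfolding gelfand_radius_FR_less_one_everywhere_iff[OF T F, symmetric] by (auto simp: r_T r_FR)
  have case2: "(\<exists>l1 l2. spec_rad T < l1 \<and> l1 < l2 \<and> spec_rad (FR F T l1) \<ge> 1 \<and> spec_rad (FR F T l2) < 1)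
      \<longleftrightarrow> gelfand_radius T < gelfand_radius (T + F)"
    unfolding gelfand_radius_FR_crosses_one_iff[OF T F, symmetric] by (simp add: r_T r_FR cong: conj_cong)
  show ?thesis
    using gelfand_radius_FR_antimono[OF T F] r_FR gelfand_radius_le_sum[OF T F]
      convex_on_cong_on[OF convex_on_gelfand_radius_FR[OF T F]] gelfand_radius_FR_at_sum[OF T F]
    unfolding case1 case2 by (auto simp: r_T r_A)
qed

end
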